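(* Let $\boldsymbol{\phi}\in\mathcal{D}_{\boldsymbol{\phi}}(\boldsymbol{r})$. If for all $i\in\mathcal{V}$, $j\in\{0\}\cup\mathcal{V}$ and $(a,k)\in\mathcal{S}$, $$\delta_{ij}(a,k)\begin{cases}=\min_{j'\in\{0\}\cup\mathcal{V}}\delta_{ij'}(a,k), & \text{if }\phi_{ij}(a,k)>0,\\ \ge\min_{j'\in\{0\}\cup\mathcal{V}}\delta_{ij'}(a,k), & \text{if }\phi_{ij}(a,k)=0,\end{cases}$$ then $\boldsymbol{\phi}$ is a global optimal solution of $\min_{\boldsymbol{\phi}\in\mathcal{D}_{\boldsymbol{\phi}}(\boldsymbol{r})}T(\boldsymbol{\phi})$.
   Context: Service-chain computing network model. $\mathcal{G}=(\mathcal{V},\mathcal{E})$ is a directed, strongly connected graph whose links are bidirectional ($(i,j)\in\mathcal{E}\Rightarrow(j,i)\in\mathcal{E}$). $\mathcal{A}$ is a finite set of applications; application $a$ has a destination $d_a\in\mathcal{V}$ and a chain of $|\mathcal{T}_a|$ tasks performed in order. The set of stages is $\mathcal{S}=\{(a,k): a\in\mathcal{A}, k=0,1,\dots,|\mathcal{T}_a|\}$; stage $(a,k)$ denotes packets that have completed the first $k$ tasks of $a$, and has packet size $L_{(a,k)}>0$. Exogenous input rates are $r_i(a)\ge 0$ (stage $(a,0)$ packets injected at node $i$), $\boldsymbol{r}=[r_i(a)]$. The forwarding strategy $\boldsymbol{\phi}=[\phi_{ij}(a,k)]_{(a,k)\in\mathcal{S},i\in\mathcal{V},j\in\{0\}\cup\mathcal{V}}$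 has $\phi_{ij}(a,k)\in[0,1]$; for $j\in\mathcal{V}$ it is the fraction of node $i$'s stage-$(a,k)$ traffic sent to node $j$ (with $\phi_{ij}(a,k)=0$ if $(i,j)\notin\mathcal{E}$), and $\phi_{i0}(a,k)$ is the fraction sent to $i$'s local processor, which converts each stage-$(a,k)$ packet into one stage-$(a,k+1)$ packet; $\phi_{i0}(a,|\mathcal{T}_a|)=0$. Flow conservation: $\sum_{j\in\{0\}\cup\mathcal{V}}\phi_{ij}(a,k)=0$ if $k=|\mathcal{T}_a|$ and $i=d_a$, and $=1$ otherwise. Traffic $t_i(a,k)$ satisfies $t_i(a,0)=\sum_{j\in\mathcal{V}}t_j(a,0)\phi_{ji}(a,0)+r_i(a)$ and, for $k\ge1$, $t_i(a,k)=\sum_{j\in\mathcal{V}}t_j(a,k)\phi_{ji}(a,k)+t_i(a,k-1)\phi_{i0}(a,k-1)$. Link flows $f_{ij}(a,k)=t_i(a,k)\phi_{ij}(a,k)$, processor inputs $g_i(a,k)=t_i(a,k)\phi_{i0}(a,k)$, total link flow $F_{ij}=\sum_{(a,k)\in\mathcal{S}}L_{(a,k)}f_{ij}(a,k)$, computation workload $G_i=\sum_{(a,k)\in\mathcal{S}}w_i(a,k)g_i(a,k)$ with weights $w_i(a,k)>0$. Link costs $D_{ij}(\cdot)$ and computation costs $C_i(\cdot)$ are increasing, continuously differentiable, convex functions (possibly taking value $+\infty$ outside a domain). Total cost $T(\boldsymbol{\phi})=\sum_{(i,j)\in\mathcal{E}}D_{ij}(F_{ij})+\sum_{i\in\mathcal{V}}C_i(G_i)$.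 The feasible set $\mathcal{D}_{\boldsymbol{\phi}}(\boldsymbol{r})$ consists of $\boldsymbol{\phi}$ satisfying flow conservation with all $D_{ij}(F_{ij})<\infty$ and $C_i(G_i)<\infty$; $\boldsymbol{r}$ is such that this set is nonempty. Marginal quantities: $\partial T/\partial t_i(a,k)$ is the marginal total cost of an additional exogenous injection of stage-$(a,k)$ traffic at node $i$ (with $\boldsymbol{\phi}$ fixed); it satisfies $\partial T/\partial t_{d_a}(a,|\mathcal{T}_a|)=0$, for $k=|\mathcal{T}_a|$: $\frac{\partial T}{\partial t_i(a,k)}=\sum_{j\in\mathcal{V}}\phi_{ij}(a,k)\big(L_{(a,k)}D'_{ij}(F_{ij})+\frac{\partial T}{\partial t_j(a,k)}\big)$, and for $k<|\mathcal{T}_a|$: $\frac{\partial T}{\partial t_i(a,k)}=\phi_{i0}(a,k)\big(w_i(a,k)C'_i(G_i)+\frac{\partial T}{\partial t_i(a,k+1)}\big)+\sum_{j\in\mathcal{V}}\phi_{ij}(a,k)\big(L_{(a,k)}D'_{ij}(F_{ij})+\frac{\partial T}{\partial t_j(a,k)}\big)$. Modified marginals: $\delta_{ij}(a,k)=L_{(a,k)}D'_{ij}(F_{ij})+\frac{\partial T}{\partial t_j(a,k)}$ for $j\in\mathcal{V}$ with $(i,j)\in\mathcal{E}$, $\delta_{i0}(a,k)=w_i(a,k)C'_i(G_i)+\frac{\partial T}{\partial t_i(a,k+1)}$ for $k<|\mathcal{T}_a|$, and $\delta_{ij}(a,k)=\infty$ for $(i,j)\notin\mathcal{E}$ and $\delta_{i0}(a,|\mathcal{T}_a|)=\infty$.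 *)

theory Defs
  imports Complex_Main "HOL-Library.Extended_Real"
begin

text \<open>The index j in {0} \<union> V is encoded as 'v option:
  None is the local processor (index 0), Some j is neighbour node j.
  nT a = |T_a|, dest a = d_a, L a k = L_(a,k), w i a k = w_i(a,k), r i a = r_i(a).
  Cost functions D i j, C i are extended-real valued (value \<infinity> outside their domain),
  with derivatives D' i j, C' i.\<close>

definition ext_convex_nonneg :: "(real \<Rightarrow> ereal) \<Rightarrow> bool" where
  "ext_convex_nonneg h \<longleftrightarrow>
     (\<forall>x y u. 0 \<le> x \<longrightarrow> 0 \<le> y \<longrightarrow> 0 \<le> u \<longrightarrow> u \<le> 1 \<longrightarrow>
        h ((1 - u) * x + u * y) \<le> ereal (1 - u) * h x + ereal u * h y)"

definition cost_fun :: "(real \<Rightarrow> ereal) \<Rightarrow> (real \<Rightarrow> real) \<Rightarrow> bool" where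
  "cost_fun h h' \<longleftrightarrow>
     (\<forall>x\<ge>0. h x \<noteq> -\<infinity>) \<and>
     mono_on {0..} h \<and>
     ext_convex_nonneg h \<and>
     (\<forall>x. 0 \<le> x \<and> h x < \<infinity> \<longrightarrow>
        ((\<lambda>y. real_of_ereal (h y)) has_real_derivative h' x)
          (at x within {y. 0 \<le> y \<and> h y < \<infinity>})) \<and>
     continuous_on {y. 0 \<le> y \<and> h y < \<infinity>} h'"

definition network :: "'v set \<Rightarrow> ('v \<times> 'v) set \<Rightarrow> bool" where
  "network V E \<longleftrightarrow> finite V \<and> E \<subseteq> V \<times> V \<and>
     (\<forall>i j. (i, j) \<in> E \<longrightarrow> (j, i) \<in> E) \<and>
     (\<forall>i\<in>V. \<forall>j\<in>V. (i, j) \<in> E\<^sup>*)"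

definition apps_ok :: "'v set \<Rightarrow> 'a set \<Rightarrow> ('a \<Rightarrow> 'v) \<Rightarrow> ('a \<Rightarrow> nat)
    \<Rightarrow> ('a \<Rightarrow> nat \<Rightarrow> real) \<Rightarrow> ('v \<Rightarrow> 'a \<Rightarrow> nat \<Rightarrow> real) \<Rightarrow> bool" where
  "apps_ok V A dest nT L w \<longleftrightarrow> finite A \<and>
     (\<forall>a\<in>A. dest a \<in> V \<and> (\<forall>k\<le>nT a. L a k > 0 \<and> (\<forall>i\<in>V. w i a k > 0)))"

abbreviation nbrs0 :: "'v set \<Rightarrow> 'v option set" where
  "nbrs0 V \<equiv> insert None (Some ` V)"

definition strategy_ok :: "'v set \<Rightarrow> ('v \<times> 'v) set \<Rightarrow> 'a set \<Rightarrow> ('a \<Rightarrow> 'v) \<Rightarrow> ('a \<Rightarrow> nat)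
    \<Rightarrow> ('v \<Rightarrow> 'v option \<Rightarrow> 'a \<Rightarrow> nat \<Rightarrow> real) \<Rightarrow> bool" where
  "strategy_ok V E A dest nT phi \<longleftrightarrow>
     (\<forall>i\<in>V. \<forall>a\<in>A.
        phi i None a (nT a) = 0 \<and>
        (\<forall>k\<le>nT a.
           (\<forall>j\<in>nbrs0 V. 0 \<le> phi i j a k \<and> phi i j a k \<le> 1) \<and>
           (\<forall>j\<in>V. (i, j) \<notin> E \<longrightarrow> phi i (Some j) a k = 0) \<and>
           (\<Sum>j\<in>nbrs0 V. phi i j a k) = (if k = nT a \<and> i = dest a then 0 else 1)))"

definition is_traffic :: "'v set \<Rightarrow> 'a set \<Rightarrow> ('a \<Rightarrow> nat) \<Rightarrow> ('v \<Rightarrow> 'a \<Rightarrow> real)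
    \<Rightarrow> ('v \<Rightarrow> 'v option \<Rightarrow> 'a \<Rightarrow> nat \<Rightarrow> real) \<Rightarrow> ('v \<Rightarrow> 'a \<Rightarrow> nat \<Rightarrow> real) \<Rightarrow> bool" where
  "is_traffic V A nT r phi t \<longleftrightarrow>
     (\<forall>i\<in>V. \<forall>a\<in>A.
        (\<forall>k\<le>nT a. 0 \<le> t i a k) \<and>
        t i a 0 = (\<Sum>j\<in>V. t j a 0 * phi j (Some i) a 0) + r i a \<and>
        (\<forall>k. 1 \<le> k \<and> k \<le> nT a \<longrightarrow>
           t i a k = (\<Sum>j\<in>V. t j a k * phi j (Some i) a k) + t i a (k - 1) * phi i None a (k - 1)))"

definition link_flow :: "'a set \<Rightarrow> ('a \<Rightarrow> nat) \<Rightarrow> ('a \<Rightarrow> nat \<Rightarrow> real)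
    \<Rightarrow> ('v \<Rightarrow> 'v option \<Rightarrow> 'a \<Rightarrow> nat \<Rightarrow> real) \<Rightarrow> ('v \<Rightarrow> 'a \<Rightarrow> nat \<Rightarrow> real) \<Rightarrow> 'v \<Rightarrow> 'v \<Rightarrow> real" where
  "link_flow A nT L phi t i j = (\<Sum>a\<in>A. \<Sum>k\<le>nT a. L a k * (t i a k * phi i (Some j) a k))"

definition workload :: "'a set \<Rightarrow> ('a \<Rightarrow> nat) \<Rightarrow> ('v \<Rightarrow> 'a \<Rightarrow> nat \<Rightarrow> real)
    \<Rightarrow> ('v \<Rightarrow> 'v option \<Rightarrow> 'a \<Rightarrow> nat \<Rightarrow> real) \<Rightarrow> ('v \<Rightarrow> 'a \<Rightarrow> nat \<Rightarrow> real) \<Rightarrow> 'v \<Rightarrow> real" where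
  "workload A nT w phi t i = (\<Sum>a\<in>A. \<Sum>k\<le>nT a. w i a k * (t i a k * phi i None a k))"

definition total_cost :: "'v set \<Rightarrow> ('v \<times> 'v) set \<Rightarrow> 'a set \<Rightarrow> ('a \<Rightarrow> nat)
    \<Rightarrow> ('a \<Rightarrow> nat \<Rightarrow> real) \<Rightarrow> ('v \<Rightarrow> 'a \<Rightarrow> nat \<Rightarrow> real)
    \<Rightarrow> ('v \<Rightarrow> 'v \<Rightarrow> real \<Rightarrow> ereal) \<Rightarrow> ('v \<Rightarrow> real \<Rightarrow> ereal)
    \<Rightarrow> ('v \<Rightarrow> 'v option \<Rightarrow> 'a \<Rightarrow> nat \<Rightarrow> real) \<Rightarrow> ('v \<Rightarrow> 'a \<Rightarrow> nat \<Rightarrow> real) \<Rightarrow> ereal" where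
  "total_cost V E A nT L w D C phi t =
     (\<Sum>(i, j)\<in>E. D i j (link_flow A nT L phi t i j)) + (\<Sum>i\<in>V. C i (workload A nT w phi t i))"

definition feasible :: "'v set \<Rightarrow> ('v \<times> 'v) set \<Rightarrow> 'a set \<Rightarrow> ('a \<Rightarrow> 'v) \<Rightarrow> ('a \<Rightarrow> nat)
    \<Rightarrow> ('a \<Rightarrow> nat \<Rightarrow> real) \<Rightarrow> ('v \<Rightarrow> 'a \<Rightarrow> nat \<Rightarrow> real)
    \<Rightarrow> ('v \<Rightarrow> 'v \<Rightarrow> real \<Rightarrow> ereal) \<Rightarrow> ('v \<Rightarrow> real \<Rightarrow> ereal) \<Rightarrow> ('v \<Rightarrow> 'a \<Rightarrow> real)
    \<Rightarrow> ('v \<Rightarrow> 'v option \<Rightarrow> 'a \<Rightarrow> nat \<Rightarrow> real) \<Rightarrow> ('v \<Rightarrow> 'a \<Rightarrow> nat \<Rightarrow> real) \<Rightarrow> bool" where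
  "feasible V E A dest nT L w D C r phi t \<longleftrightarrow>
     strategy_ok V E A dest nT phi \<and> is_traffic V A nT r phi t \<and>
     (\<forall>(i, j)\<in>E. D i j (link_flow A nT L phi t i j) < \<infinity>) \<and>
     (\<forall>i\<in>V. C i (workload A nT w phi t i) < \<infinity>)"

text \<open>m i a k = \<partial>T/\<partial>t_i(a,k): the marginal cost equations.\<close>
definition is_marginal :: "'v set \<Rightarrow> 'a set \<Rightarrow> ('a \<Rightarrow> 'v) \<Rightarrow> ('a \<Rightarrow> nat)
    \<Rightarrow> ('a \<Rightarrow> nat \<Rightarrow> real) \<Rightarrow> ('v \<Rightarrow> 'a \<Rightarrow> nat \<Rightarrow> real)
    \<Rightarrow> ('v \<Rightarrow> 'v \<Rightarrow> real \<Rightarrow> real) \<Rightarrow> ('v \<Rightarrow> real \<Rightarrow> real)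
    \<Rightarrow> ('v \<Rightarrow> 'v option \<Rightarrow> 'a \<Rightarrow> nat \<Rightarrow> real) \<Rightarrow> ('v \<Rightarrow> 'a \<Rightarrow> nat \<Rightarrow> real)
    \<Rightarrow> ('v \<Rightarrow> 'a \<Rightarrow> nat \<Rightarrow> real) \<Rightarrow> bool" where
  "is_marginal V A dest nT L w D' C' phi t m \<longleftrightarrow>
     (\<forall>a\<in>A. m (dest a) a (nT a) = 0 \<and>
        (\<forall>i\<in>V. \<forall>k\<le>nT a.
           m i a k =
             (if k < nT a
              then phi i None a k * (w i a k * C' i (workload A nT w phi t i) + m i a (Suc k))
              else 0) +
             (\<Sum>j\<in>V. phi i (Some j) a k *
                  (L a k * D' i j (link_flow A nT L phi t i j) + m j a k))))"

definition delta :: "('v \<times> 'v) set \<Rightarrow> 'a set \<Rightarrow> ('a \<Rightarrow> nat)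
    \<Rightarrow> ('a \<Rightarrow> nat \<Rightarrow> real) \<Rightarrow> ('v \<Rightarrow> 'a \<Rightarrow> nat \<Rightarrow> real)
    \<Rightarrow> ('v \<Rightarrow> 'v \<Rightarrow> real \<Rightarrow> real) \<Rightarrow> ('v \<Rightarrow> real \<Rightarrow> real)
    \<Rightarrow> ('v \<Rightarrow> 'v option \<Rightarrow> 'a \<Rightarrow> nat \<Rightarrow> real) \<Rightarrow> ('v \<Rightarrow> 'a \<Rightarrow> nat \<Rightarrow> real)
    \<Rightarrow> ('v \<Rightarrow> 'a \<Rightarrow> nat \<Rightarrow> real) \<Rightarrow> 'v \<Rightarrow> 'v option \<Rightarrow> 'a \<Rightarrow> nat \<Rightarrow> ereal" where
  "delta E A nT L w D' C' phi t m i j a k =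
     (case j of
        None \<Rightarrow> (if k < nT a
                 then ereal (w i a k * C' i (workload A nT w phi t i) + m i a (Suc k))
                 else \<infinity>)
      | Some j' \<Rightarrow> (if (i, j') \<in> E
                    then ereal (L a k * D' i j' (link_flow A nT L phi t i j') + m j' a k)
                    else \<infinity>))"

end

theory Submission
  imports Defs
begin

text \<open>Since all link and processing costs are convex, T(phi') is bounded below by the
  first-order expansion of T around phi, whose variable part is
  \<Sum> D'_ij(F_ij) F'_ij + \<Sum> C'_i(G_i) G'_i.  Flow conservation rewrites this linear part,
  node by node and stage by stage, as
  \<Sum>_{i,a,k} t'_i(a,k) (\<Sum>_j phi'_ij(a,k) delta_ij(a,k) - \<partial>T/\<partial>t_i(a,k)) plus a term
  depending only on r.  The optimality condition says that \<partial>T/\<partial>t_i(a,k) is the minimum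
  of delta_ij(a,k) over j, so each summand vanishes for phi and is nonnegative for any
  other strategy phi'.  Hence the linear part is minimised at phi and T(phi) \<le> T(phi').\<close>

text \<open>Unlike convex_on_imp_above_tangent, x may lie on the boundary of S (e.g. a zero flow),
  where only a one-sided derivative exists.\<close>
lemma segment_convex_above_tangent:
  fixes f :: "real \<Rightarrow> real"
  assumes deriv: "(f has_real_derivative f') (at x within S)"
    and segment: "\<And>u. 0 \<le> u \<Longrightarrow> u \<le> 1 \<Longrightarrow>
      x + u * (y - x) \<in> S \<and> f (x + u * (y - x)) \<le> f x + u * (f y - f x)"
  shows "f' * (y - x) \<le> f y - f x"
proof -
  define g where "g u = x + u * (y - x)" for u :: real
  have "(f \<circ> g has_real_derivative f' * (y - x)) (at 0 within {0..1})"
  proof (rule DERIV_image_chain)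
    have "g ` {0..1} \<subseteq> S" using segment by (auto simp: g_def)
    then show "(f has_real_derivative f') (at (g 0) within g ` {0..1})"
      using DERIV_subset[OF deriv] by (simp add: g_def)
    show "(g has_real_derivative y - x) (at 0 within {0..1})"
      unfolding g_def by (auto intro!: derivative_eq_intros)
  qed
  then have "((\<lambda>u. (f (g u) - f x) / u) \<longlongrightarrow> f' * (y - x)) (at_right 0)"
    by (simp add: has_field_derivative_iff at_within_Icc_at_right g_def)
  moreover have "eventually (\<lambda>u. (f (g u) - f x) / u \<le> f y - f x) (at_right 0)"
    using eventually_at_right_real[OF zero_less_one]
  proof eventually_elim
    case (elim u)
    then show ?case using segment[of u] by (simp add: g_def divide_le_eq mult.commute)
  qed
  ultimately show ?thesis by (rule tendsto_upperbound) simp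
qed

lemma cost_fun_above_tangent:
  assumes h: "cost_fun h h'" and "0 \<le> x" "h x < \<infinity>" "0 \<le> y"
  shows "h x + ereal (h' x * (y - x)) \<le> h y"
proof (cases "h y = \<infinity>")
  case False
  define f where "f z = real_of_ereal (h z)" for z
  define S where "S = {z. 0 \<le> z \<and> h z < \<infinity>}"
  have finite_val: "h z = ereal (f z)" if "0 \<le> z" "h z < \<infinity>" for z
    using h that by (cases "h z") (auto simp: cost_fun_def f_def)
  have hx: "h x = ereal (f x)" and hy: "h y = ereal (f y)"
    using finite_val assms False by auto
  have "h' x * (y - x) \<le> f y - f x"
  proof (rule segment_convex_above_tangent)
    show "(f has_real_derivative h' x) (at x within S)"
      using h assms unfolding cost_fun_def S_def f_def by blast
    fix u :: real assume u: "0 \<le> u" "u \<le> 1"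
    have z: "x + u * (y - x) = (1 - u) * x + u * y" by (simp add: algebra_simps)
    have "0 \<le> x + u * (y - x)" unfolding z using u assms by simp
    moreover have "h (x + u * (y - x)) \<le> ereal (1 - u) * h x + ereal u * h y"
      using h u assms unfolding cost_fun_def ext_convex_nonneg_def z by blast
    moreover have "ereal (1 - u) * h x + ereal u * h y = ereal (f x + u * (f y - f x))"
      unfolding hx hy by (simp add: algebra_simps)
    ultimately show "x + u * (y - x) \<in> S \<and> f (x + u * (y - x)) \<le> f x + u * (f y - f x)"
      using finite_val unfolding S_def by fastforce
  qed
  then show ?thesis using hx hy by simp
qed simp

lemma sum_nbrs0: "finite V \<Longrightarrow> (\<Sum>j\<in>nbrs0 V. f j) = f None + (\<Sum>j\<in>V. f (Some j))"
  by (simp add: sum.reindex)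

locale service_chain =
  fixes V :: "'v set" and E :: "('v \<times> 'v) set" and A :: "'a set"
    and dest :: "'a \<Rightarrow> 'v" and nT :: "'a \<Rightarrow> nat"
    and L :: "'a \<Rightarrow> nat \<Rightarrow> real" and w :: "'v \<Rightarrow> 'a \<Rightarrow> nat \<Rightarrow> real"
    and r :: "'v \<Rightarrow> 'a \<Rightarrow> real"
  assumes network: "network V E" and apps: "apps_ok V A dest nT L w"
begin

lemma finite_V: "finite V" and links_subset: "E \<subseteq> V \<times> V"
  using network by (auto simp: network_def)

abbreviation F :: "('v \<Rightarrow> 'v option \<Rightarrow> 'a \<Rightarrow> nat \<Rightarrow> real) \<Rightarrow> ('v \<Rightarrow> 'a \<Rightarrow> nat \<Rightarrow> real) \<Rightarrow> 'v \<Rightarrow> 'v \<Rightarrow> real"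
  where "F \<equiv> link_flow A nT L"

abbreviation G :: "('v \<Rightarrow> 'v option \<Rightarrow> 'a \<Rightarrow> nat \<Rightarrow> real) \<Rightarrow> ('v \<Rightarrow> 'a \<Rightarrow> nat \<Rightarrow> real) \<Rightarrow> 'v \<Rightarrow> real"
  where "G \<equiv> workload A nT w"

lemma
  assumes "strategy_ok V E A dest nT p" "is_traffic V A nT r p \<tau>" "i \<in> V"
  shows link_flow_nonneg: "j \<in> V \<Longrightarrow> 0 \<le> F p \<tau> i j"
    and workload_nonneg: "0 \<le> G p \<tau> i"
  using assms apps unfolding link_flow_def workload_def
  by (auto intro!: sum_nonneg simp: strategy_ok_def is_traffic_def apps_ok_def less_imp_le)

definition linearized_cost :: "('v \<Rightarrow> 'v \<Rightarrow> real) \<Rightarrow> ('v \<Rightarrow> real)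
    \<Rightarrow> ('v \<Rightarrow> 'v option \<Rightarrow> 'a \<Rightarrow> nat \<Rightarrow> real) \<Rightarrow> ('v \<Rightarrow> 'a \<Rightarrow> nat \<Rightarrow> real) \<Rightarrow> real" where
  "linearized_cost dF dG p \<tau> = (\<Sum>(i, j)\<in>E. dF i j * F p \<tau> i j) + (\<Sum>i\<in>V. dG i * G p \<tau> i)"

lemma link_cost_stagewise:
  assumes "strategy_ok V E A dest nT p"
  shows "(\<Sum>(i, j)\<in>E. dF i j * F p \<tau> i j)
    = (\<Sum>a\<in>A. \<Sum>k\<le>nT a. \<Sum>i\<in>V. \<tau> i a k * (\<Sum>j\<in>V. p i (Some j) a k * (L a k * dF i j)))"
proof -
  have "(\<Sum>(i, j)\<in>E. dF i j * F p \<tau> i j) = (\<Sum>(i, j)\<in>V \<times> V. dF i j * F p \<tau> i j)"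
    using assms links_subset finite_V
    by (intro sum.mono_neutral_left) (auto simp: strategy_ok_def link_flow_def)
  also have "\<dots> = (\<Sum>i\<in>V. \<Sum>j\<in>V. \<Sum>a\<in>A. \<Sum>k\<le>nT a. \<tau> i a k * (p i (Some j) a k * (L a k * dF i j)))"
    unfolding sum.cartesian_product[symmetric] link_flow_def sum_distrib_left
    by (simp add: mult_ac)
  also have "\<dots> = (\<Sum>i\<in>V. \<Sum>a\<in>A. \<Sum>k\<le>nT a. \<Sum>j\<in>V. \<tau> i a k * (p i (Some j) a k * (L a k * dF i j)))"
    by (intro sum.cong refl, subst sum.swap, intro sum.cong refl, rule sum.swap)
  also have "\<dots> = (\<Sum>a\<in>A. \<Sum>k\<le>nT a. \<Sum>i\<in>V. \<Sum>j\<in>V. \<tau> i a k * (p i (Some j) a k * (L a k * dF i j)))"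
    by (subst sum.swap, intro sum.cong refl, rule sum.swap)
  finally show ?thesis by (simp add: sum_distrib_left)
qed

lemma processing_cost_stagewise:
  "(\<Sum>i\<in>V. dG i * G p \<tau> i)
    = (\<Sum>a\<in>A. \<Sum>k\<le>nT a. \<Sum>i\<in>V. \<tau> i a k * (p i None a k * (w i a k * dG i)))"
proof -
  have "(\<Sum>i\<in>V. dG i * G p \<tau> i)
    = (\<Sum>i\<in>V. \<Sum>a\<in>A. \<Sum>k\<le>nT a. \<tau> i a k * (p i None a k * (w i a k * dG i)))"
    unfolding workload_def sum_distrib_left by (simp add: mult_ac)
  also have "\<dots> = (\<Sum>a\<in>A. \<Sum>k\<le>nT a. \<Sum>i\<in>V. \<tau> i a k * (p i None a k * (w i a k * dG i)))"
    by (subst sum.swap, intro sum.cong refl, rule sum.swap)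
  finally show ?thesis .
qed

text \<open>By flow conservation, the stage-(a,k) traffic forwarded into node j is t_j(a,k) minus
  its exogenous input (k = 0) or its processed stage-(a,k-1) traffic (k > 0), so the downstream
  marginal costs telescope along the chain.\<close>
lemma traffic_telescope:
  assumes p: "strategy_ok V E A dest nT p" and tr: "is_traffic V A nT r p \<tau>" and a: "a \<in> A"
  shows "(\<Sum>k\<le>nT a. \<Sum>i\<in>V. \<tau> i a k * ((\<Sum>j\<in>V. p i (Some j) a k * m j a k) + p i None a k * m i a (Suc k)))
    = (\<Sum>k\<le>nT a. \<Sum>i\<in>V. \<tau> i a k * m i a k) - (\<Sum>i\<in>V. r i a * m i a 0)"
proof -
  define X where "X k = (\<Sum>i\<in>V. \<tau> i a k * (\<Sum>j\<in>V. p i (Some j) a k * m j a k))" for k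
  define Y where "Y k = (\<Sum>i\<in>V. \<tau> i a k * (p i None a k * m i a (Suc k)))" for k
  define M where "M k = (\<Sum>i\<in>V. \<tau> i a k * m i a k)" for k
  have X_swap: "X k = (\<Sum>j\<in>V. m j a k * (\<Sum>i\<in>V. \<tau> i a k * p i (Some j) a k))" for k
    unfolding X_def sum_distrib_left by (subst sum.swap) (simp add: mult_ac)
  have X_0: "X 0 = M 0 - (\<Sum>i\<in>V. r i a * m i a 0)"
  proof -
    have "X 0 = (\<Sum>j\<in>V. m j a 0 * (\<tau> j a 0 - r j a))"
      unfolding X_swap using tr a by (intro sum.cong refl) (auto simp: is_traffic_def)
    then show ?thesis unfolding M_def by (simp add: algebra_simps sum_subtractf)
  qed
  have X_Suc: "X (Suc k) = M (Suc k) - Y k" if "Suc k \<le> nT a" for k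
  proof -
    have "X (Suc k) = (\<Sum>j\<in>V. m j a (Suc k) * (\<tau> j a (Suc k) - \<tau> j a k * p j None a k))"
      unfolding X_swap using tr a that by (intro sum.cong refl) (auto simp: is_traffic_def)
    then show ?thesis unfolding M_def Y_def by (simp add: algebra_simps sum_subtractf)
  qed
  have partial: "(\<Sum>k\<le>n. X k + Y k) = (\<Sum>k\<le>n. M k) - (\<Sum>i\<in>V. r i a * m i a 0) + Y n"
    if "n \<le> nT a" for n
    using that by (induction n) (simp_all add: X_0 X_Suc)
  have "Y (nT a) = 0" using p a unfolding Y_def strategy_ok_def by simp
  then show ?thesis
    using partial[of "nT a"] unfolding X_def Y_def M_def by (simp add: sum.distrib algebra_simps)
qed

text \<open>Weighted by the derivatives dF, dG of the link and processing costs, hop_cost is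
  the paper's modified marginal delta, without its value \<infinity> on non-links and at the last stage.\<close>
definition hop_cost :: "('v \<Rightarrow> 'v \<Rightarrow> real) \<Rightarrow> ('v \<Rightarrow> real) \<Rightarrow> ('v \<Rightarrow> 'a \<Rightarrow> nat \<Rightarrow> real)
    \<Rightarrow> 'v \<Rightarrow> 'v option \<Rightarrow> 'a \<Rightarrow> nat \<Rightarrow> real" where
  "hop_cost dF dG m i j a k = (case j of
      None \<Rightarrow> w i a k * dG i + m i a (Suc k)
    | Some j' \<Rightarrow> L a k * dF i j' + m j' a k)"

lemma linearized_cost_via_hop_costs:
  assumes p: "strategy_ok V E A dest nT p" and tr: "is_traffic V A nT r p \<tau>"
  shows "linearized_cost dF dG p \<tau>
    = (\<Sum>a\<in>A. \<Sum>k\<le>nT a. \<Sum>i\<in>V. \<tau> i a k * ((\<Sum>j\<in>nbrs0 V. p i j a k * hop_cost dF dG m i j a k) - m i a k))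
      + (\<Sum>a\<in>A. \<Sum>i\<in>V. r i a * m i a 0)"
proof -
  have "(\<Sum>k\<le>nT a. \<Sum>i\<in>V. \<tau> i a k * ((\<Sum>j\<in>nbrs0 V. p i j a k * hop_cost dF dG m i j a k) - m i a k))
      + (\<Sum>i\<in>V. r i a * m i a 0)
    = (\<Sum>k\<le>nT a. \<Sum>i\<in>V. \<tau> i a k * ((\<Sum>j\<in>V. p i (Some j) a k * (L a k * dF i j)) + p i None a k * (w i a k * dG i)))"
    if a: "a \<in> A" for a
    using traffic_telescope[OF p tr a, of m]
    by (simp add: sum_nbrs0[OF finite_V] hop_cost_def algebra_simps sum.distrib sum_subtractf
        sum_distrib_left)
  then show ?thesis
    unfolding linearized_cost_def link_cost_stagewise[OF p] processing_cost_stagewise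
    by (simp add: sum.distrib[symmetric] algebra_simps)
qed

abbreviation hop_cost_at :: "('v \<Rightarrow> 'v \<Rightarrow> real \<Rightarrow> real) \<Rightarrow> ('v \<Rightarrow> real \<Rightarrow> real)
    \<Rightarrow> ('v \<Rightarrow> 'v option \<Rightarrow> 'a \<Rightarrow> nat \<Rightarrow> real) \<Rightarrow> ('v \<Rightarrow> 'a \<Rightarrow> nat \<Rightarrow> real)
    \<Rightarrow> ('v \<Rightarrow> 'a \<Rightarrow> nat \<Rightarrow> real) \<Rightarrow> 'v \<Rightarrow> 'v option \<Rightarrow> 'a \<Rightarrow> nat \<Rightarrow> real" where
  "hop_cost_at D' C' phi t \<equiv> hop_cost (\<lambda>i j. D' i j (F phi t i j)) (\<lambda>i. C' i (G phi t i))"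

abbreviation linearized_cost_at :: "('v \<Rightarrow> 'v \<Rightarrow> real \<Rightarrow> real) \<Rightarrow> ('v \<Rightarrow> real \<Rightarrow> real)
    \<Rightarrow> ('v \<Rightarrow> 'v option \<Rightarrow> 'a \<Rightarrow> nat \<Rightarrow> real) \<Rightarrow> ('v \<Rightarrow> 'a \<Rightarrow> nat \<Rightarrow> real)
    \<Rightarrow> ('v \<Rightarrow> 'v option \<Rightarrow> 'a \<Rightarrow> nat \<Rightarrow> real) \<Rightarrow> ('v \<Rightarrow> 'a \<Rightarrow> nat \<Rightarrow> real) \<Rightarrow> real" where
  "linearized_cost_at D' C' phi t \<equiv> linearized_cost (\<lambda>i j. D' i j (F phi t i j)) (\<lambda>i. C' i (G phi t i))"

lemma delta_eq_hop_cost: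
  assumes "strategy_ok V E A dest nT p" "i \<in> V" "a \<in> A" "k \<le> nT a" "j \<in> nbrs0 V" "0 < p i j a k"
  shows "delta E A nT L w D' C' phi t m i j a k = ereal (hop_cost_at D' C' phi t m i j a k)"
proof (cases j)
  case None
  with assms have "k < nT a" by (cases "k = nT a") (auto simp: strategy_ok_def)
  with None show ?thesis by (simp add: delta_def hop_cost_def)
next
  case (Some j')
  have "(i, j') \<in> E"
  proof (rule ccontr)
    assume "(i, j') \<notin> E"
    with assms Some have "p i j a k = 0" by (auto simp: strategy_ok_def)
    with assms show False by simp
  qed
  with Some show ?thesis by (simp add: delta_def hop_cost_def)
qed

lemma marginal_eq_hop_cost_average:
  assumes "is_marginal V A dest nT L w D' C' phi t m" "strategy_ok V E A dest nT phi"
    and "i \<in> V" "a \<in> A" "k \<le> nT a"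
  shows "(\<Sum>j\<in>nbrs0 V. phi i j a k * hop_cost_at D' C' phi t m i j a k) = m i a k"
proof -
  have "phi i None a (nT a) = 0" using assms by (simp add: strategy_ok_def)
  with assms show ?thesis
    unfolding is_marginal_def sum_nbrs0[OF finite_V] hop_cost_def
    by (cases "k < nT a") (auto simp: not_less)
qed

lemma marginal_le_hop_cost_average:
  assumes marg: "is_marginal V A dest nT L w D' C' phi t m"
    and phi: "strategy_ok V E A dest nT phi" and p: "strategy_ok V E A dest nT p"
    and i: "i \<in> V" and a: "a \<in> A" and k: "k \<le> nT a"
    and min: "\<And>j j'. j \<in> nbrs0 V \<Longrightarrow> j' \<in> nbrs0 V \<Longrightarrow> 0 < phi i j a k \<Longrightarrow>
      delta E A nT L w D' C' phi t m i j a k \<le> delta E A nT L w D' C' phi t m i j' a k"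
  shows "m i a k \<le> (\<Sum>j\<in>nbrs0 V. p i j a k * hop_cost_at D' C' phi t m i j a k)"
    (is "_ \<le> (\<Sum>j\<in>_. p i j a k * ?hop j)")
proof (cases "k = nT a \<and> i = dest a")
  case True
  have "(\<Sum>j\<in>nbrs0 V. p i j a k) = 0" and "\<And>j. j \<in> nbrs0 V \<Longrightarrow> 0 \<le> p i j a k"
    using p i a k True by (auto simp: strategy_ok_def simp del: insert_iff)
  then have "\<forall>j\<in>nbrs0 V. p i j a k = 0"
    using sum_nonneg_eq_0_iff[of "nbrs0 V" "\<lambda>j. p i j a k"] finite_V by blast
  then have "(\<Sum>j\<in>nbrs0 V. p i j a k * ?hop j) = 0" by (intro sum.neutral) auto
  moreover have "m i a k = 0" using marg a True by (simp add: is_marginal_def)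
  ultimately show ?thesis by simp
next
  case False
  let ?\<delta> = "\<lambda>j. delta E A nT L w D' C' phi t m i j a k"
  have nonneg: "0 \<le> q i j a k" if "strategy_ok V E A dest nT q" "j \<in> nbrs0 V" for q j
    using that i a k by (auto simp: strategy_ok_def)
  have phi_sum: "(\<Sum>j\<in>nbrs0 V. phi i j a k) = 1" and p_sum: "(\<Sum>j\<in>nbrs0 V. p i j a k) = 1"
    using phi p i a k False by (auto simp: strategy_ok_def)
  obtain j0 where j0: "j0 \<in> nbrs0 V" "0 < phi i j0 a k"
  proof (rule ccontr)
    assume "\<not> thesis"
    then have "\<forall>j\<in>nbrs0 V. phi i j a k = 0"
      using nonneg[OF phi] that by (meson antisym not_le)
    then have "(\<Sum>j\<in>nbrs0 V. phi i j a k) = 0" by (intro sum.neutral) auto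
    with phi_sum show False by simp
  qed
  have \<delta>_j0: "?\<delta> j0 = ereal (?hop j0)" using delta_eq_hop_cost[OF phi i a k j0] .
  have phi_hop: "phi i j a k * ?hop j = phi i j a k * ?hop j0" if j: "j \<in> nbrs0 V" for j
  proof (cases "0 < phi i j a k")
    case True
    then have "?\<delta> j = ereal (?hop j)" using delta_eq_hop_cost[OF phi i a k j] by simp
    then have "?hop j = ?hop j0" using min[OF j j0(1) True] min[OF j0(1) j j0(2)] \<delta>_j0 by simp
    then show ?thesis by simp
  qed (use nonneg[OF phi j] in simp)
  have "m i a k = (\<Sum>j\<in>nbrs0 V. phi i j a k * ?hop j)"
    using marginal_eq_hop_cost_average[OF marg phi i a k] by simp
  also have "\<dots> = (\<Sum>j\<in>nbrs0 V. phi i j a k * ?hop j0)" using phi_hop by (rule sum.cong[OF refl])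
  also have "\<dots> = ?hop j0" using phi_sum by (simp add: sum_distrib_right[symmetric])
  also have "\<dots> = (\<Sum>j\<in>nbrs0 V. p i j a k * ?hop j0)"
    using p_sum by (simp add: sum_distrib_right[symmetric])
  also have "\<dots> \<le> (\<Sum>j\<in>nbrs0 V. p i j a k * ?hop j)"
  proof (rule sum_mono)
    fix j assume j: "j \<in> nbrs0 V"
    show "p i j a k * ?hop j0 \<le> p i j a k * ?hop j"
    proof (cases "0 < p i j a k")
      case True
      then have "?\<delta> j = ereal (?hop j)" using delta_eq_hop_cost[OF p i a k j] by simp
      then have "?hop j0 \<le> ?hop j" using min[OF j0(1) j j0(2)] \<delta>_j0 by simp
      then show ?thesis using True by (simp add: mult_left_mono)
    qed (use nonneg[OF p j] in simp)
  qed
  finally show ?thesis .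
qed


lemma linearized_cost_minimal:
  assumes marg: "is_marginal V A dest nT L w D' C' phi t m"
    and phi: "strategy_ok V E A dest nT phi" and tr: "is_traffic V A nT r phi t"
    and p: "strategy_ok V E A dest nT p" and tr': "is_traffic V A nT r p \<tau>"
    and min: "\<And>i a k j j'. i \<in> V \<Longrightarrow> a \<in> A \<Longrightarrow> k \<le> nT a \<Longrightarrow>
      j \<in> nbrs0 V \<Longrightarrow> j' \<in> nbrs0 V \<Longrightarrow> 0 < phi i j a k \<Longrightarrow>
      delta E A nT L w D' C' phi t m i j a k \<le> delta E A nT L w D' C' phi t m i j' a k"
  shows "linearized_cost_at D' C' phi t phi t \<le> linearized_cost_at D' C' phi t p \<tau>"
proof -
  have "linearized_cost_at D' C' phi t phi t = (\<Sum>a\<in>A. \<Sum>i\<in>V. r i a * m i a 0)"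
    unfolding linearized_cost_via_hop_costs[OF phi tr, of _ _ m]
    by (simp add: marginal_eq_hop_cost_average[OF marg phi])
  also have "\<dots> \<le> linearized_cost_at D' C' phi t p \<tau>"
    unfolding linearized_cost_via_hop_costs[OF p tr', of _ _ m]
    using tr' marginal_le_hop_cost_average[OF marg phi p _ _ _ min]
    by (auto intro!: sum_nonneg mult_nonneg_nonneg simp: is_traffic_def)
  finally show ?thesis .
qed

lemma total_cost_above_linearization:
  assumes D_cost: "\<forall>(i, j)\<in>E. cost_fun (D i j) (D' i j)"
    and C_cost: "\<forall>i\<in>V. cost_fun (C i) (C' i)"
    and feas: "feasible V E A dest nT L w D C r phi t"
    and p: "strategy_ok V E A dest nT p" and tr': "is_traffic V A nT r p \<tau>"
  shows "total_cost V E A nT L w D C phi t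
      + ereal (linearized_cost_at D' C' phi t p \<tau> - linearized_cost_at D' C' phi t phi t)
    \<le> total_cost V E A nT L w D C p \<tau>"
proof -
  have phi: "strategy_ok V E A dest nT phi" and tr: "is_traffic V A nT r phi t"
    using feas by (auto simp: feasible_def)
  have link: "D i j (F phi t i j) + ereal (D' i j (F phi t i j) * (F p \<tau> i j - F phi t i j))
      \<le> D i j (F p \<tau> i j)" if "(i, j) \<in> E" for i j
    using that feas D_cost links_subset link_flow_nonneg[OF phi tr] link_flow_nonneg[OF p tr']
    by (intro cost_fun_above_tangent) (auto simp: feasible_def)
  have node: "C i (G phi t i) + ereal (C' i (G phi t i) * (G p \<tau> i - G phi t i))
      \<le> C i (G p \<tau> i)" if "i \<in> V" for i
    using that feas C_cost workload_nonneg[OF phi tr] workload_nonneg[OF p tr']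
    by (intro cost_fun_above_tangent) (auto simp: feasible_def)
  have lin_diff: "linearized_cost_at D' C' phi t p \<tau> - linearized_cost_at D' C' phi t phi t
    = (\<Sum>(i, j)\<in>E. D' i j (F phi t i j) * (F p \<tau> i j - F phi t i j))
      + (\<Sum>i\<in>V. C' i (G phi t i) * (G p \<tau> i - G phi t i))"
    unfolding linearized_cost_def by (simp add: split_def sum_subtractf right_diff_distrib)
  have links: "(\<Sum>(i, j)\<in>E. D i j (F phi t i j))
      + ereal (\<Sum>(i, j)\<in>E. D' i j (F phi t i j) * (F p \<tau> i j - F phi t i j))
      \<le> (\<Sum>(i, j)\<in>E. D i j (F p \<tau> i j))"
  proof -
    have "(\<Sum>(i, j)\<in>E. D i j (F phi t i j) + ereal (D' i j (F phi t i j) * (F p \<tau> i j - F phi t i j)))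
        \<le> (\<Sum>(i, j)\<in>E. D i j (F p \<tau> i j))"
      using link by (intro sum_mono) auto
    then show ?thesis by (simp add: split_def sum.distrib sum_ereal)
  qed
  have nodes: "(\<Sum>i\<in>V. C i (G phi t i)) + ereal (\<Sum>i\<in>V. C' i (G phi t i) * (G p \<tau> i - G phi t i))
      \<le> (\<Sum>i\<in>V. C i (G p \<tau> i))"
  proof -
    have "(\<Sum>i\<in>V. C i (G phi t i) + ereal (C' i (G phi t i) * (G p \<tau> i - G phi t i)))
        \<le> (\<Sum>i\<in>V. C i (G p \<tau> i))"
      using node by (intro sum_mono) auto
    then show ?thesis by (simp add: sum.distrib sum_ereal)
  qed
  show ?thesis
    using add_mono[OF links nodes] unfolding total_cost_def lin_diff by (simp add: ac_simps)
qed

end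

theorem theorem2:
  fixes V :: "'v set" and E :: "('v \<times> 'v) set" and A :: "'a set"
    and dest :: "'a \<Rightarrow> 'v" and nT :: "'a \<Rightarrow> nat"
    and L :: "'a \<Rightarrow> nat \<Rightarrow> real" and w :: "'v \<Rightarrow> 'a \<Rightarrow> nat \<Rightarrow> real"
    and r :: "'v \<Rightarrow> 'a \<Rightarrow> real"
    and D :: "'v \<Rightarrow> 'v \<Rightarrow> real \<Rightarrow> ereal" and D' :: "'v \<Rightarrow> 'v \<Rightarrow> real \<Rightarrow> real"
    and C :: "'v \<Rightarrow> real \<Rightarrow> ereal" and C' :: "'v \<Rightarrow> real \<Rightarrow> real"
    and phi :: "'v \<Rightarrow> 'v option \<Rightarrow> 'a \<Rightarrow> nat \<Rightarrow> real"
    and t :: "'v \<Rightarrow> 'a \<Rightarrow> nat \<Rightarrow> real"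
    and m :: "'v \<Rightarrow> 'a \<Rightarrow> nat \<Rightarrow> real"
  assumes net: "network V E"
    and apps: "apps_ok V A dest nT L w"
    and r_nonneg: "\<forall>i\<in>V. \<forall>a\<in>A. 0 \<le> r i a"
    and D_cost: "\<forall>(i, j)\<in>E. cost_fun (D i j) (D' i j)"
    and C_cost: "\<forall>i\<in>V. cost_fun (C i) (C' i)"
    and feas: "feasible V E A dest nT L w D C r phi t"
    and marg: "is_marginal V A dest nT L w D' C' phi t m"
    and cond: "\<forall>i\<in>V. \<forall>a\<in>A. \<forall>k\<le>nT a. \<forall>j\<in>nbrs0 V.
       (phi i j a k > 0 \<longrightarrow>
          delta E A nT L w D' C' phi t m i j a k
            = Min ((\<lambda>j'. delta E A nT L w D' C' phi t m i j' a k) ` nbrs0 V)) \<and>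
       (phi i j a k = 0 \<longrightarrow>
          delta E A nT L w D' C' phi t m i j a k
            \<ge> Min ((\<lambda>j'. delta E A nT L w D' C' phi t m i j' a k) ` nbrs0 V))"
  shows "\<forall>phi' t'. feasible V E A dest nT L w D C r phi' t' \<longrightarrow>
           total_cost V E A nT L w D C phi t \<le> total_cost V E A nT L w D C phi' t'"
proof (intro allI impI)
  fix phi' t' assume feas': "feasible V E A dest nT L w D C r phi' t'"
  interpret service_chain V E A dest nT L w r using net apps by unfold_locales
  have phi: "strategy_ok V E A dest nT phi" "is_traffic V A nT r phi t"
    and phi': "strategy_ok V E A dest nT phi'" "is_traffic V A nT r phi' t'"
    using feas feas' by (auto simp: feasible_def)
  let ?\<delta> = "delta E A nT L w D' C' phi t m"
  have "?\<delta> i j a k \<le> ?\<delta> i j' a k"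
    if "i \<in> V" "a \<in> A" "k \<le> nT a" "j \<in> nbrs0 V" "j' \<in> nbrs0 V" "0 < phi i j a k" for i a k j j'
  proof -
    have "?\<delta> i j a k = Min ((\<lambda>j'. ?\<delta> i j' a k) ` nbrs0 V)" using cond that by blast
    also have "\<dots> \<le> ?\<delta> i j' a k" using finite_V that(5) by (intro Min_le) auto
    finally show ?thesis .
  qed
  then have "linearized_cost_at D' C' phi t phi t \<le> linearized_cost_at D' C' phi t phi' t'"
    by (rule linearized_cost_minimal[OF marg phi phi'])
  then have "total_cost V E A nT L w D C phi t
      \<le> total_cost V E A nT L w D C phi t
        + ereal (linearized_cost_at D' C' phi t phi' t' - linearized_cost_at D' C' phi t phi t)"
    by (simp add: add_increasing2)
  also have "\<dots> \<le> total_cost V E A nT L w D C phi' t'"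
    by (rule total_cost_above_linearization[OF D_cost C_cost feas phi'])
  finally show "total_cost V E A nT L w D C phi t \<le> total_cost V E A nT L w D C phi' t'" .
qed

end
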